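(* Let $\mathcal G$ be a continuous game with players $k\in\{1,\dots,K\}$, action sets $\mathcal Z_k=\mathbb R^{n_k}$ and twice continuously differentiable cost functions $f_k:\mathbb R^n\to\mathbb R$ ($n=n_1+\dots+n_K$), and let $F=F_{\mathcal G}:\mathbb R^n\to\mathbb R^n$ be its gradient operator. Suppose $\mathcal G$ is monotone and that there are $\ell,\Lambda>0$ with $\|F(z)-F(z')\|\le \ell\|z-z'\|$ and $\|\partial F(z)-\partial F(z')\|_\sigma\le\Lambda\|z-z'\|$ for all $z,z'\in\mathbb R^n$. Let $z^{(-1)},z^{(0)}\in\mathbb R^n$ and suppose there is $z^*\in\mathbb R^n$ with $F(z^* )=0$, $\|z^*-z^{(-1)}\|\le D$ and $\|z^*-z^{(0)}\|\le D$. Let $\eta\le\min\{\frac{1}{150\ell},\frac{1}{1711D\Lambda}\}$ and let $z^{(t)}$ be the iterates of the optimistic gradient algorithm $z^{(t+1)}=z^{(t)}-2\eta F(z^{(t)})+\eta F(z^{(t-1)})$, $t\ge0$. Then for every integer $T\ge1$, $$\|F(z^{(T)})\|\le\frac{60D}{\eta\sqrt T}.$$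
   Context: For the game, $z=(z_1,\dots,z_K)$ with $z_k\in\mathbb R^{n_k}$, $z_{-k}$ denotes the actions of all players other than $k$, and $F_{\mathcal G}(z):=(\nabla_{z_1}f_1(z),\dots,\nabla_{z_K}f_K(z))\in\mathbb R^n$. The game is monotone if $\langle F_{\mathcal G}(z')-F_{\mathcal G}(z),z'-z\rangle\ge0$ for all $z,z'$. $\partial F$ denotes the Jacobian of $F$, $\|\cdot\|$ the Euclidean norm and $\|\cdot\|_\sigma$ the spectral norm. *)

theory Defs
  imports "HOL-Analysis.Analysis"
begin

text \<open>The joint action space
  R^n is real^'n; each coordinate i belongs to player pl i, so the action space of
  player k is the set of coordinates pl -` {k}.  Costs are f k :: real^'n => real.\<close>

definition C2_fun :: "(real^'n \<Rightarrow> real) \<Rightarrow> bool" where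
  "C2_fun g \<longleftrightarrow> (\<exists>g' g''.
      (\<forall>z. (g has_derivative blinfun_apply (g' z)) (at z)) \<and>
      (\<forall>z. (g' has_derivative blinfun_apply (g'' z)) (at z)) \<and>
      continuous_on UNIV g'')"

definition game_op :: "('k \<Rightarrow> real^'n \<Rightarrow> real) \<Rightarrow> ('n \<Rightarrow> 'k) \<Rightarrow> real^'n \<Rightarrow> real^'n" where
  "game_op f pl z = (\<chi> i. frechet_derivative (f (pl i)) (at z) (axis i 1))"

text \<open>Spectral norm of the difference of Jacobians = operator norm of the
  difference of the derivatives (Euclidean norms).\<close>
definition jac_diff_norm :: "(real^'n \<Rightarrow> real^'n) \<Rightarrow> real^'n \<Rightarrow> real^'n \<Rightarrow> real" where
  "jac_diff_norm F z z' =
     onorm (\<lambda>h. frechet_derivative F (at z) h - frechet_derivative F (at z') h)"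

end

theory Submission
  imports Defs
begin

(* Shift indices so that x_k = z^(k-1), and put w_k = x_(k+1) + eta F(x_k).  The optimistic
   step becomes Popov's scheme x_(k+1) = w_k - eta F(x_k), w_(k+1) = w_k - eta F(x_(k+1)).
   Monotonicity between w_k and w_(k+1), together with Lipschitz continuity, makes the
   potential |F(w_k)|^2 + |F(w_k) - F(x_k)|^2 nonincreasing.  Monotonicity at z* gives the
   usual decrease of |w_k - z*|^2 up to Lipschitz error terms; telescoping bounds
   sum_k |F(x_k)|^2 by 2 D^2 / eta^2.  The potential at step k+1 is at most
   3 (|F(x_k)|^2 + |F(x_(k+1))|^2), so T times the potential at step T is O(D^2 / eta^2),
   and that potential bounds |F(x_(T+1))|^2 up to a factor 8. *)

lemma power2_sum_le: "(a + b)\<^sup>2 \<le> 2 * (a\<^sup>2 + b\<^sup>2)" for a b :: real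
  using zero_le_power2[of "a - b"] by (simp add: power2_eq_square algebra_simps)

lemma norm_potential_step_le:
  fixes p q b c :: "'a::real_inner"
  assumes inner_nonpos: "(q - p) \<bullet> b \<le> 0"
    and close: "norm (q - b) \<le> e * norm (c - b)" and "0 \<le> e" "e \<le> 1/2"
  shows "(norm q)\<^sup>2 + (norm (q - b))\<^sup>2 \<le> (norm p)\<^sup>2 + (norm (p - c))\<^sup>2"
proof -
  have polar: "(norm q)\<^sup>2 - (norm p)\<^sup>2 = (norm (q - b))\<^sup>2 - (norm (p - b))\<^sup>2 + 2 * ((q - p) \<bullet> b)"
    by (simp add: power2_norm_eq_inner inner_diff_left inner_diff_right inner_commute algebra_simps)
  have "norm (c - b) \<le> norm (p - b) + norm (p - c)"
    using norm_triangle_ineq[of "p - b" "c - p"] by (simp add: norm_minus_commute)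
  with close \<open>0 \<le> e\<close> have "norm (q - b) \<le> e * (norm (p - b) + norm (p - c))"
    by (meson mult_left_mono order_trans)
  then have "(norm (q - b))\<^sup>2 \<le> e\<^sup>2 * (norm (p - b) + norm (p - c))\<^sup>2"
    by (metis norm_ge_zero power_mono power_mult_distrib)
  also have "\<dots> \<le> e\<^sup>2 * (2 * ((norm (p - b))\<^sup>2 + (norm (p - c))\<^sup>2))"
    by (intro mult_left_mono power2_sum_le) simp
  also have "\<dots> \<le> (1/4) * (2 * ((norm (p - b))\<^sup>2 + (norm (p - c))\<^sup>2))"
    using \<open>0 \<le> e\<close> \<open>e \<le> 1/2\<close> power_mono[of e "1/2" 2]
    by (intro mult_right_mono) (auto simp: power_divide)
  finally have "2 * (norm (q - b))\<^sup>2 \<le> (norm (p - b))\<^sup>2 + (norm (p - c))\<^sup>2"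
    by simp
  then show ?thesis using polar inner_nonpos by linarith
qed

locale optimistic_gradient =
  fixes F :: "'a::real_inner \<Rightarrow> 'a" and l \<eta> :: real and x :: "nat \<Rightarrow> 'a"
  assumes monotone: "\<And>u v. 0 \<le> (F u - F v) \<bullet> (u - v)"
    and lipschitz: "\<And>u v. norm (F u - F v) \<le> l * norm (u - v)"
    and l_nonneg: "0 \<le> l"
    and eta_pos: "0 < \<eta>"
    and step: "\<And>k. x (Suc (Suc k)) = x (Suc k) - (2 * \<eta>) *\<^sub>R F (x (Suc k)) + \<eta> *\<^sub>R F (x k)"
begin

definition anchor :: "nat \<Rightarrow> 'a" where
  "anchor k = x (Suc k) + \<eta> *\<^sub>R F (x k)"

definition potential :: "nat \<Rightarrow> real" where
  "potential k = (norm (F (anchor k)))\<^sup>2 + (norm (F (anchor k) - F (x k)))\<^sup>2"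

lemma lipschitz_scaled:
  assumes "u - v = \<eta> *\<^sub>R d"
  shows "norm (F u - F v) \<le> (l * \<eta>) * norm d"
  using lipschitz[of u v] eta_pos by (simp add: assms mult.assoc)

lemma x_Suc_anchor: "x (Suc k) = anchor k - \<eta> *\<^sub>R F (x k)"
  by (simp add: anchor_def)

lemma anchor_Suc: "anchor (Suc k) = anchor k - \<eta> *\<^sub>R F (x (Suc k))"
  using step[of k] by (simp add: anchor_def scaleR_left_distrib[symmetric] algebra_simps)

lemma potential_Suc_le:
  assumes "l * \<eta> \<le> 1/2"
  shows "potential (Suc k) \<le> potential k"
proof -
  have "(F (anchor (Suc k)) - F (anchor k)) \<bullet> (- (\<eta> *\<^sub>R F (x (Suc k)))) \<ge> 0"
    using monotone[of "anchor (Suc k)" "anchor k"] by (simp add: anchor_Suc)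
  then have "(F (anchor (Suc k)) - F (anchor k)) \<bullet> F (x (Suc k)) \<le> 0"
    using eta_pos by (simp add: mult_le_0_iff)
  moreover have "anchor (Suc k) - x (Suc k) = \<eta> *\<^sub>R (F (x k) - F (x (Suc k)))"
    by (simp add: anchor_Suc x_Suc_anchor algebra_simps)
  then have "norm (F (anchor (Suc k)) - F (x (Suc k))) \<le> (l * \<eta>) * norm (F (x k) - F (x (Suc k)))"
    by (rule lipschitz_scaled)
  ultimately show ?thesis
    unfolding potential_def
    by (rule norm_potential_step_le) (use assms l_nonneg eta_pos in auto)
qed

lemma potential_decseq:
  assumes "l * \<eta> \<le> 1/2"
  shows "decseq potential"
  using potential_Suc_le[OF assms] by (rule decseq_SucI)

lemma potential_Suc_bound:
  assumes "l * \<eta> \<le> 1/4"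
  shows "potential (Suc k) \<le> 3 * ((norm (F (x k)))\<^sup>2 + (norm (F (x (Suc k))))\<^sup>2)"
proof -
  define A where "A = norm (F (x (Suc k)))"
  define B where "B = norm (F (x k))"
  define r where "r = norm (F (anchor (Suc k)) - F (x (Suc k)))"
  have "anchor (Suc k) - x (Suc k) = \<eta> *\<^sub>R (F (x k) - F (x (Suc k)))"
    by (simp add: anchor_Suc x_Suc_anchor algebra_simps)
  then have "r \<le> (l * \<eta>) * norm (F (x k) - F (x (Suc k)))"
    unfolding r_def by (rule lipschitz_scaled)
  also have "\<dots> \<le> (l * \<eta>) * (A + B)"
    unfolding A_def B_def using l_nonneg eta_pos norm_triangle_ineq4
    by (intro mult_left_mono) (auto simp: add.commute)
  finally have "r\<^sup>2 \<le> (l * \<eta>)\<^sup>2 * (A + B)\<^sup>2"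
    by (metis r_def norm_ge_zero power_mono power_mult_distrib)
  also have "\<dots> \<le> (1/16) * (2 * (A\<^sup>2 + B\<^sup>2))"
    using assms l_nonneg eta_pos power_mono[of "l * \<eta>" "1/4" 2]
    by (intro mult_mono power2_sum_le) (auto simp: power_divide)
  finally have r_sq: "8 * r\<^sup>2 \<le> A\<^sup>2 + B\<^sup>2" by simp
  have "norm (F (anchor (Suc k))) \<le> A + r"
    unfolding A_def r_def using norm_triangle_ineq[of "F (x (Suc k))" "F (anchor (Suc k)) - F (x (Suc k))"]
    by simp
  then have "(norm (F (anchor (Suc k))))\<^sup>2 \<le> 2 * (A\<^sup>2 + r\<^sup>2)"
    by (metis norm_ge_zero power_mono power2_sum_le order_trans)
  with r_sq have "potential (Suc k) \<le> 3 * (A\<^sup>2 + B\<^sup>2)"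
    unfolding potential_def r_def using zero_le_power2[of A] zero_le_power2[of B] by (smt (verit))
  then show ?thesis by (simp add: A_def B_def add.commute)
qed

lemma op_Suc_sq_le_potential:
  assumes "l * \<eta> \<le> 1"
  shows "(norm (F (x (Suc k))))\<^sup>2 \<le> 8 * potential k"
proof -
  define H where "H = norm (F (anchor k))"
  define R where "R = norm (F (anchor k) - F (x k))"
  have "x (Suc k) - anchor k = \<eta> *\<^sub>R (- F (x k))"
    by (simp add: x_Suc_anchor)
  then have "norm (F (x (Suc k)) - F (anchor k)) \<le> (l * \<eta>) * norm (F (x k))"
    by (metis lipschitz_scaled norm_minus_cancel)
  also have "\<dots> \<le> norm (F (x k))"
    using assms l_nonneg eta_pos by (intro mult_left_le_one_le) auto
  also have "\<dots> \<le> H + R"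
    unfolding H_def R_def using norm_triangle_ineq4[of "F (anchor k)" "F (anchor k) - F (x k)"] by simp
  moreover have "norm (F (x (Suc k))) \<le> H + norm (F (x (Suc k)) - F (anchor k))"
    unfolding H_def using norm_triangle_ineq[of "F (anchor k)" "F (x (Suc k)) - F (anchor k)"] by simp
  moreover have "0 \<le> R"
    by (simp add: R_def)
  ultimately have "norm (F (x (Suc k))) \<le> 2 * (H + R)"
    by (smt (verit))
  then have "(norm (F (x (Suc k))))\<^sup>2 \<le> (2 * (H + R))\<^sup>2"
    by (rule power_mono) simp
  also have "\<dots> = 4 * (H + R)\<^sup>2"
    by (simp add: power2_eq_square algebra_simps)
  also have "\<dots> \<le> 8 * (H\<^sup>2 + R\<^sup>2)"
    using power2_sum_le[of H R] by simp
  finally show ?thesis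
    by (simp add: potential_def H_def R_def)
qed

lemma anchor_dist_Suc_le:
  assumes "F zs = 0"
  shows "(norm (anchor (Suc k) - zs))\<^sup>2
    \<le> (norm (anchor k - zs))\<^sup>2 + \<eta>\<^sup>2 * (norm (F (x (Suc k)) - F (x k)))\<^sup>2 - \<eta>\<^sup>2 * (norm (F (x k)))\<^sup>2"
proof -
  define u where "u = x (Suc k) - zs"
  define b where "b = F (x (Suc k))"
  define c where "c = F (x k)"
  have "0 \<le> b \<bullet> u"
    using monotone[of "x (Suc k)" zs] assms by (simp add: b_def u_def)
  moreover have "anchor k - zs = u + \<eta> *\<^sub>R c"
    by (simp add: anchor_def u_def c_def)
  moreover have "anchor (Suc k) - zs = (u + \<eta> *\<^sub>R c) - \<eta> *\<^sub>R b"
    by (simp add: anchor_Suc x_Suc_anchor u_def b_def c_def algebra_simps)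
  moreover have "(norm ((u + \<eta> *\<^sub>R c) - \<eta> *\<^sub>R b))\<^sup>2
      = (norm (u + \<eta> *\<^sub>R c))\<^sup>2 + \<eta>\<^sup>2 * (norm (b - c))\<^sup>2 - \<eta>\<^sup>2 * (norm c)\<^sup>2 - 2 * \<eta> * (b \<bullet> u)"
    unfolding power2_norm_eq_inner
    by (simp add: inner_add_left inner_add_right inner_diff_left inner_diff_right
        inner_commute power2_eq_square algebra_simps)
  ultimately show ?thesis
    using eta_pos by (simp add: b_def c_def)
qed

lemma op_diff_Suc_sq_le:
  "(norm (F (x (Suc (Suc k))) - F (x (Suc k))))\<^sup>2
    \<le> (l * \<eta>)\<^sup>2 * (8 * (norm (F (x (Suc k))))\<^sup>2 + 2 * (norm (F (x k)))\<^sup>2)"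
proof -
  define A where "A = norm (F (x (Suc k)))"
  define B where "B = norm (F (x k))"
  have "x (Suc (Suc k)) - x (Suc k) = \<eta> *\<^sub>R F (x k) - (2 * \<eta>) *\<^sub>R F (x (Suc k))"
    using step[of k] by simp
  also have "\<dots> = \<eta> *\<^sub>R (F (x k) - 2 *\<^sub>R F (x (Suc k)))"
    by (simp add: scaleR_diff_right mult.commute)
  finally have "x (Suc (Suc k)) - x (Suc k) = \<eta> *\<^sub>R (F (x k) - 2 *\<^sub>R F (x (Suc k)))" .
  then have "norm (F (x (Suc (Suc k))) - F (x (Suc k))) \<le> (l * \<eta>) * norm (F (x k) - 2 *\<^sub>R F (x (Suc k)))"
    by (rule lipschitz_scaled)
  also have "\<dots> \<le> (l * \<eta>) * (2 * A + B)"
    unfolding A_def B_def using l_nonneg eta_pos norm_triangle_ineq4[of "F (x k)" "2 *\<^sub>R F (x (Suc k))"]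
    by (intro mult_left_mono) auto
  finally have "(norm (F (x (Suc (Suc k))) - F (x (Suc k))))\<^sup>2 \<le> (l * \<eta>)\<^sup>2 * (2 * A + B)\<^sup>2"
    by (metis norm_ge_zero power_mono power_mult_distrib)
  also have "\<dots> \<le> (l * \<eta>)\<^sup>2 * (2 * ((2 * A)\<^sup>2 + B\<^sup>2))"
    by (intro mult_left_mono power2_sum_le) simp
  finally show ?thesis
    by (simp add: A_def B_def power_mult_distrib algebra_simps)
qed

lemma sum_op_diff_sq_le:
  "(\<Sum>k<N. (norm (F (x (Suc k)) - F (x k)))\<^sup>2)
    \<le> (norm (F (x 1) - F (x 0)))\<^sup>2 + 10 * (l * \<eta>)\<^sup>2 * (\<Sum>k<N. (norm (F (x k)))\<^sup>2)"
proof (cases N)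
  case 0
  then show ?thesis by simp
next
  case (Suc M)
  define a where "a k = (norm (F (x k)))\<^sup>2" for k
  have "(\<Sum>k<M. a k) \<le> (\<Sum>k<N. a k)"
    unfolding Suc by (intro sum_mono2) (auto simp: a_def)
  moreover have "(\<Sum>k<M. a (Suc k)) \<le> (\<Sum>k<N. a k)"
    unfolding Suc sum.lessThan_Suc_shift[of a M] by (simp add: a_def)
  ultimately have a_le: "2 * (\<Sum>k<M. a k) + 8 * (\<Sum>k<M. a (Suc k)) \<le> 10 * (\<Sum>k<N. a k)"
    by linarith
  have "(\<Sum>k<N. (norm (F (x (Suc k)) - F (x k)))\<^sup>2)
      = (norm (F (x 1) - F (x 0)))\<^sup>2 + (\<Sum>k<M. (norm (F (x (Suc (Suc k))) - F (x (Suc k))))\<^sup>2)"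
    unfolding Suc sum.lessThan_Suc_shift by simp
  also have "\<dots> \<le> (norm (F (x 1) - F (x 0)))\<^sup>2 + (\<Sum>k<M. (l * \<eta>)\<^sup>2 * (8 * a (Suc k) + 2 * a k))"
    unfolding a_def by (intro add_left_mono sum_mono op_diff_Suc_sq_le)
  also have "\<dots> = (norm (F (x 1) - F (x 0)))\<^sup>2
      + (l * \<eta>)\<^sup>2 * (2 * (\<Sum>k<M. a k) + 8 * (\<Sum>k<M. a (Suc k)))"
    by (simp add: sum.distrib sum_distrib_left algebra_simps)
  also have "\<dots> \<le> (norm (F (x 1) - F (x 0)))\<^sup>2 + (l * \<eta>)\<^sup>2 * (10 * (\<Sum>k<N. a k))"
    using a_le by (intro add_left_mono mult_left_mono) auto
  finally show ?thesis by (simp add: a_def)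
qed

lemma sum_op_sq_le:
  assumes "F zs = 0"
  shows "\<eta>\<^sup>2 * (1 - 10 * (l * \<eta>)\<^sup>2) * (\<Sum>k<N. (norm (F (x k)))\<^sup>2)
    \<le> (norm (anchor 0 - zs))\<^sup>2 + \<eta>\<^sup>2 * (norm (F (x 1) - F (x 0)))\<^sup>2"
proof -
  define d where "d k = (norm (anchor k - zs))\<^sup>2" for k
  define S where "S = (\<Sum>k<N. (norm (F (x k)))\<^sup>2)"
  have "d N - d 0 = (\<Sum>k<N. d (Suc k) - d k)"
    by (rule sum_lessThan_telescope[symmetric])
  also have "\<dots> \<le> (\<Sum>k<N. \<eta>\<^sup>2 * (norm (F (x (Suc k)) - F (x k)))\<^sup>2 - \<eta>\<^sup>2 * (norm (F (x k)))\<^sup>2)"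
    unfolding d_def using anchor_dist_Suc_le[OF assms] by (intro sum_mono) (simp add: algebra_simps)
  also have "\<dots> = \<eta>\<^sup>2 * (\<Sum>k<N. (norm (F (x (Suc k)) - F (x k)))\<^sup>2) - \<eta>\<^sup>2 * S"
    by (simp add: S_def sum_subtractf sum_distrib_left)
  also have "\<dots> \<le> \<eta>\<^sup>2 * ((norm (F (x 1) - F (x 0)))\<^sup>2 + 10 * (l * \<eta>)\<^sup>2 * S) - \<eta>\<^sup>2 * S"
    unfolding S_def by (intro diff_right_mono mult_left_mono sum_op_diff_sq_le) simp
  finally have "d N - d 0 \<le> \<eta>\<^sup>2 * (norm (F (x 1) - F (x 0)))\<^sup>2 - \<eta>\<^sup>2 * (1 - 10 * (l * \<eta>)\<^sup>2) * S"
    by (simp add: algebra_simps)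
  moreover have "0 \<le> d N" by (simp add: d_def)
  ultimately show ?thesis unfolding d_def S_def by linarith
qed

lemma anchor_0_dist_le:
  assumes "F zs = 0" "norm (zs - x 0) \<le> D" "norm (zs - x 1) \<le> D"
  shows "norm (anchor 0 - zs) \<le> (1 + l * \<eta>) * D"
proof -
  have "norm (F (x 0)) \<le> l * D"
    using lipschitz[of "x 0" zs] assms(1,2) l_nonneg
    by (simp add: norm_minus_commute) (meson mult_left_mono order_trans)
  from mult_left_mono[OF this less_imp_le[OF eta_pos]]
  have "\<eta> * norm (F (x 0)) \<le> (l * \<eta>) * D"
    by (simp add: mult_ac)
  moreover have "norm (anchor 0 - zs) \<le> norm (x 1 - zs) + \<eta> * norm (F (x 0))"
    using norm_triangle_ineq[of "x 1 - zs" "\<eta> *\<^sub>R F (x 0)"] eta_pos by (simp add: anchor_def algebra_simps)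
  ultimately show ?thesis
    using assms(3) by (simp add: norm_minus_commute algebra_simps)
qed

lemma first_op_diff_le:
  assumes "norm (zs - x 0) \<le> D" "norm (zs - x 1) \<le> D"
  shows "\<eta> * norm (F (x 1) - F (x 0)) \<le> 2 * (l * \<eta>) * D"
proof -
  have "norm (x 1 - x 0) \<le> 2 * D"
    using norm_triangle_ineq[of "x 1 - zs" "zs - x 0"] assms by (simp add: norm_minus_commute)
  then have "norm (F (x 1) - F (x 0)) \<le> l * (2 * D)"
    using lipschitz[of "x 1" "x 0"] l_nonneg by (meson mult_left_mono order_trans)
  from mult_left_mono[OF this less_imp_le[OF eta_pos]] show ?thesis
    by (simp add: mult_ac)
qed

lemma sum_op_sq_bound:
  assumes "F zs = 0" "norm (zs - x 0) \<le> D" "norm (zs - x 1) \<le> D" "l * \<eta> \<le> 1/10"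
  shows "\<eta>\<^sup>2 * (\<Sum>k<N. (norm (F (x k)))\<^sup>2) \<le> 2 * D\<^sup>2"
proof -
  define e where "e = l * \<eta>"
  define S where "S = \<eta>\<^sup>2 * (\<Sum>k<N. (norm (F (x k)))\<^sup>2)"
  have e: "0 \<le> e" "e \<le> 1/10" "e\<^sup>2 \<le> 1/100"
    using assms(4) l_nonneg eta_pos power_mono[of e "1/10" 2] by (auto simp: e_def power_divide)
  have "0 \<le> S" by (simp add: S_def sum_nonneg)
  have "(norm (anchor 0 - zs))\<^sup>2 \<le> ((1 + e) * D)\<^sup>2"
    using anchor_0_dist_le[OF assms(1-3)] by (intro power_mono) (simp_all add: e_def)
  moreover have "\<eta>\<^sup>2 * (norm (F (x 1) - F (x 0)))\<^sup>2 \<le> (2 * e * D)\<^sup>2"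
    using power_mono[OF first_op_diff_le[OF assms(2,3)], of 2] eta_pos
    by (simp add: e_def power_mult_distrib)
  ultimately have "(1 - 10 * e\<^sup>2) * S \<le> (1 + 2 * e + 5 * e\<^sup>2) * D\<^sup>2"
    using sum_op_sq_le[OF assms(1), of N]
    by (simp add: S_def e_def power2_eq_square algebra_simps)
  moreover have "9/10 * S \<le> (1 - 10 * e\<^sup>2) * S"
    using e \<open>0 \<le> S\<close> by (intro mult_right_mono) auto
  moreover have "(1 + 2 * e + 5 * e\<^sup>2) * D\<^sup>2 \<le> 5/4 * D\<^sup>2"
    using e by (intro mult_right_mono) auto
  ultimately show ?thesis
    unfolding S_def using zero_le_power2[of D] by linarith
qed

lemma potential_mult_le_sum:
  assumes "l * \<eta> \<le> 1/4"
  shows "real T * potential T \<le> 6 * (\<Sum>k<Suc T. (norm (F (x k)))\<^sup>2)"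
proof -
  define a where "a k = (norm (F (x k)))\<^sup>2" for k
  have "real T * potential T = (\<Sum>k<T. potential T)"
    by simp
  also have "\<dots> \<le> (\<Sum>k<T. potential (Suc k))"
  proof (intro sum_mono)
    fix k assume "k \<in> {..<T}"
    moreover have "decseq potential"
      using assms by (intro potential_decseq) simp
    ultimately show "potential T \<le> potential (Suc k)"
      by (simp add: antimonoD)
  qed
  also have "\<dots> \<le> (\<Sum>k<T. 3 * (a k + a (Suc k)))"
    unfolding a_def using assms by (intro sum_mono potential_Suc_bound)
  also have "\<dots> = 3 * ((\<Sum>k<T. a k) + (\<Sum>k<T. a (Suc k)))"
    by (simp add: sum.distrib sum_distrib_left)
  also have "\<dots> \<le> 3 * ((\<Sum>k<Suc T. a k) + (\<Sum>k<Suc T. a k))"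
  proof -
    have "(\<Sum>k<T. a k) \<le> (\<Sum>k<Suc T. a k)"
      by (intro sum_mono2) (auto simp: a_def)
    moreover have "(\<Sum>k<T. a (Suc k)) \<le> (\<Sum>k<Suc T. a k)"
      unfolding sum.lessThan_Suc_shift[of a T] by (simp add: a_def)
    ultimately show ?thesis by simp
  qed
  finally show ?thesis by (simp add: a_def)
qed

theorem last_iterate_bound:
  assumes "F zs = 0" "norm (zs - x 0) \<le> D" "norm (zs - x 1) \<le> D" "l * \<eta> \<le> 1/10" "1 \<le> T"
  shows "norm (F (x (Suc T))) \<le> 10 * D / (\<eta> * sqrt T)"
proof -
  define G where "G = norm (F (x (Suc T)))"
  define S where "S = (\<Sum>k<Suc T. (norm (F (x k)))\<^sup>2)"
  have "(G * (\<eta> * sqrt T))\<^sup>2 = \<eta>\<^sup>2 * (real T * G\<^sup>2)"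
    by (simp add: power_mult_distrib)
  also have "\<dots> \<le> \<eta>\<^sup>2 * (real T * (8 * potential T))"
    unfolding G_def using op_Suc_sq_le_potential assms(4) by (intro mult_left_mono) auto
  also have "\<dots> = 8 * \<eta>\<^sup>2 * (real T * potential T)"
    by simp
  also have "\<dots> \<le> 8 * \<eta>\<^sup>2 * (6 * S)"
    unfolding S_def using potential_mult_le_sum assms(4) by (intro mult_left_mono) auto
  also have "\<dots> = 48 * (\<eta>\<^sup>2 * S)"
    by simp
  also have "\<dots> \<le> 48 * (2 * D\<^sup>2)"
    using sum_op_sq_bound[OF assms(1-4), of "Suc T"] unfolding S_def by linarith
  also have "\<dots> \<le> (10 * D)\<^sup>2"
    by (simp add: power_mult_distrib)
  finally have "(G * (\<eta> * sqrt T))\<^sup>2 \<le> (10 * D)\<^sup>2" .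
  moreover have "0 \<le> 10 * D"
    using order_trans[OF norm_ge_zero assms(2)] by simp
  ultimately have "G * (\<eta> * sqrt T) \<le> 10 * D"
    by (rule power2_le_imp_le)
  then show ?thesis
    using eta_pos assms(5) by (simp add: G_def pos_le_divide_eq)
qed

end

theorem theorem5:
  fixes f :: "'k::finite \<Rightarrow> real^'n \<Rightarrow> real"
    and pl :: "'n \<Rightarrow> 'k"
    and l \<Lambda> D \<eta> :: real
    and z :: "int \<Rightarrow> real^'n"
    and zstar :: "real^'n"
  assumes players: "surj pl"
    and C2: "\<And>k. C2_fun (f k)"
    and monotone: "\<And>x y. (game_op f pl y - game_op f pl x) \<bullet> (y - x) \<ge> 0"
    and l_pos: "l > 0" and \<Lambda>_pos: "\<Lambda> > 0"
    and F_lip: "\<And>x y. norm (game_op f pl x - game_op f pl y) \<le> l * norm (x - y)"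
    and J_lip: "\<And>x y. jac_diff_norm (game_op f pl) x y \<le> \<Lambda> * norm (x - y)"
    and zero: "game_op f pl zstar = 0"
    and D1: "norm (zstar - z (-1)) \<le> D"
    and D0: "norm (zstar - z 0) \<le> D"
    and eta_pos: "\<eta> > 0"
    and eta1: "\<eta> \<le> 1 / (150 * l)"
    and eta2: "\<eta> * (1711 * D * \<Lambda>) \<le> 1"
    and OG: "\<And>t. t \<ge> 0 \<Longrightarrow>
              z (t + 1) = z t - (2 * \<eta>) *\<^sub>R game_op f pl (z t) + \<eta> *\<^sub>R game_op f pl (z (t - 1))"
  shows "\<forall>T::nat. T \<ge> 1 \<longrightarrow>
           norm (game_op f pl (z (int T))) \<le> 60 * D / (\<eta> * sqrt (real T))"
proof (intro allI impI)
  fix T :: nat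
  assume "T \<ge> 1"
  interpret optimistic_gradient "game_op f pl" l \<eta> "\<lambda>k. z (int k - 1)"
  proof
    show "0 \<le> (game_op f pl u - game_op f pl v) \<bullet> (u - v)" for u v
      by (rule monotone)
    show "norm (game_op f pl u - game_op f pl v) \<le> l * norm (u - v)" for u v
      by (rule F_lip)
    show "0 \<le> l" "0 < \<eta>"
      using l_pos eta_pos by simp_all
    show "z (int (Suc (Suc k)) - 1) = z (int (Suc k) - 1) - (2 * \<eta>) *\<^sub>R game_op f pl (z (int (Suc k) - 1))
        + \<eta> *\<^sub>R game_op f pl (z (int k - 1))" for k
      using OG[of "int k"] by (simp add: add.commute)
  qed
  have "l * \<eta> \<le> 1/150"
    using eta1 l_pos by (simp add: field_simps)
  then have "norm (game_op f pl (z (int T))) \<le> 10 * D / (\<eta> * sqrt T)"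
    using last_iterate_bound[OF zero, of D T] D0 D1 \<open>T \<ge> 1\<close> by simp
  also have "\<dots> \<le> 60 * D / (\<eta> * sqrt T)"
    using order_trans[OF norm_ge_zero D0] eta_pos by (intro divide_right_mono) simp_all
  finally show "norm (game_op f pl (z (int T))) \<le> 60 * D / (\<eta> * sqrt (real T))" .
qed

end
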